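(* Let $P$ be a poset and $e:P\to L$ a join-completion of $P$. Then $(\mathcal{U}_e)^-$ is maximal.
   Context: A join-completion of $P$ is an order embedding $e:P\to L$ into a complete lattice with every $x\in L$ equal to $\bigvee\{e(p):e(p)\le x\}$. $\Gamma_e$ is the standard closure operator on $P$ whose closed sets are the sets $e^{-1}(x^\downarrow)$, $x\in L$, and $\mathcal{U}_e=\{S\subseteq P:\bigvee S\text{ exists in }P\text{ and }\bigvee S\in\Gamma_e(S)\}$. A join-specification for $P$ is a set $\mathcal{U}\subseteq\wp(P)$ such that $\bigvee S$ exists for every $S\in\mathcal{U}$ and $\{p\}\in\mathcal{U}$ for all $p$. A $\mathcal{U}$-ideal is a down-closed $C$ with $\bigvee S\in C$ whenever $S\in\mathcal{U}$, $S\subseteq C$; $\mathcal{I}_{\mathcal{U}}$ is the lattice of $\mathcal{U}$-ideals; $\Gamma_{\mathcal{U}}(S)$ the smallest $\mathcal{U}$-ideal containing $S$; $\mathcal{U}^+=\{S:\bigvee S\text{ exists and }\bigvee S\in\Gamma_{\mathcal{U}}(S)\}$; $\mathcal{U}$ is maximal if $\mathcal{U}=\mathcal{U}^+$ and frame-generating if $\mathcal{I}_{\mathcal{U}}$ is a frame. For a join-specification $\mathcal{V}$, $\mathcal{V}^-$ denotes the largest frame-generating join-specification contained in $\mathcal{V}$ (which exists). *)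

theory Defs
  imports Main
begin

definition is_join :: "'a::order set \<Rightarrow> 'a \<Rightarrow> bool" where
  "is_join S x \<longleftrightarrow> (\<forall>s\<in>S. s \<le> x) \<and> (\<forall>y. (\<forall>s\<in>S. s \<le> y) \<longrightarrow> x \<le> y)"

definition has_join :: "'a::order set \<Rightarrow> bool" where
  "has_join S \<longleftrightarrow> (\<exists>x. is_join S x)"

definition join :: "'a::order set \<Rightarrow> 'a" where
  "join S = (THE x. is_join S x)"

definition order_embedding :: "('a::order \<Rightarrow> 'b::order) \<Rightarrow> bool" where
  "order_embedding e \<longleftrightarrow> (\<forall>p q. p \<le> q \<longleftrightarrow> e p \<le> e q)"

definition join_completion :: "('a::order \<Rightarrow> 'b::complete_lattice) \<Rightarrow> bool" where
  "join_completion e \<longleftrightarrow> order_embedding e \<and> (\<forall>x. x = Sup {e p | p. e p \<le> x})"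

definition Gamma_e :: "('a::order \<Rightarrow> 'b::complete_lattice) \<Rightarrow> 'a set \<Rightarrow> 'a set" where
  "Gamma_e e S = \<Inter>{C. (\<exists>x. C = e -` {..x}) \<and> S \<subseteq> C}"

definition U_e :: "('a::order \<Rightarrow> 'b::complete_lattice) \<Rightarrow> 'a set set" where
  "U_e e = {S. has_join S \<and> join S \<in> Gamma_e e S}"

definition join_spec :: "'a::order set set \<Rightarrow> bool" where
  "join_spec U \<longleftrightarrow> (\<forall>S\<in>U. has_join S) \<and> (\<forall>p. {p} \<in> U)"

definition U_ideal :: "'a::order set set \<Rightarrow> 'a set \<Rightarrow> bool" where
  "U_ideal U C \<longleftrightarrow> (\<forall>x y. y \<in> C \<longrightarrow> x \<le> y \<longrightarrow> x \<in> C) \<and> (\<forall>S\<in>U. S \<subseteq> C \<longrightarrow> join S \<in> C)"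

definition I_U :: "'a::order set set \<Rightarrow> 'a set set" where
  "I_U U = {C. U_ideal U C}"

definition Gamma_U :: "'a::order set set \<Rightarrow> 'a set \<Rightarrow> 'a set" where
  "Gamma_U U S = \<Inter>{C. U_ideal U C \<and> S \<subseteq> C}"

definition U_plus :: "'a::order set set \<Rightarrow> 'a set set" where
  "U_plus U = {S. has_join S \<and> join S \<in> Gamma_U U S}"

definition maximal_spec :: "'a::order set set \<Rightarrow> bool" where
  "maximal_spec U \<longleftrightarrow> U = U_plus U"

definition lub_in :: "'c set set \<Rightarrow> 'c set set \<Rightarrow> 'c set \<Rightarrow> bool" where
  "lub_in X B a \<longleftrightarrow> a \<in> X \<and> (\<forall>b\<in>B. b \<subseteq> a) \<and> (\<forall>c\<in>X. (\<forall>b\<in>B. b \<subseteq> c) \<longrightarrow> a \<subseteq> c)"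

definition glb_in :: "'c set set \<Rightarrow> 'c set set \<Rightarrow> 'c set \<Rightarrow> bool" where
  "glb_in X B a \<longleftrightarrow> a \<in> X \<and> (\<forall>b\<in>B. a \<subseteq> b) \<and> (\<forall>c\<in>X. (\<forall>b\<in>B. c \<subseteq> b) \<longrightarrow> c \<subseteq> a)"

definition lubX :: "'c set set \<Rightarrow> 'c set set \<Rightarrow> 'c set" where
  "lubX X B = (THE a. lub_in X B a)"

definition glbX :: "'c set set \<Rightarrow> 'c set set \<Rightarrow> 'c set" where
  "glbX X B = (THE a. glb_in X B a)"

definition is_frame :: "'c set set \<Rightarrow> bool" where
  "is_frame X \<longleftrightarrow> (\<forall>B\<subseteq>X. \<exists>a. lub_in X B a) \<and> (\<forall>B\<subseteq>X. \<exists>a. glb_in X B a) \<and>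
     (\<forall>a\<in>X. \<forall>B\<subseteq>X. glbX X {a, lubX X B} = lubX X ((\<lambda>b. glbX X {a, b}) ` B))"

definition frame_generating :: "'a::order set set \<Rightarrow> bool" where
  "frame_generating U \<longleftrightarrow> is_frame (I_U U)"

definition minus_spec :: "'a::order set set \<Rightarrow> 'a set set" where
  "minus_spec V = (THE W. join_spec W \<and> frame_generating W \<and> W \<subseteq> V \<and>
      (\<forall>W'. join_spec W' \<and> frame_generating W' \<and> W' \<subseteq> V \<longrightarrow> W' \<subseteq> W))"

end

theory Submission
  imports Defs
begin

text \<open>A join-specification U generates a frame exactly when, for S in U and p below the join
  of S, the element p lies in the U-ideal generated by the meets of p with the members of S.
  This condition is preserved under unions, so (U_e)^- is the union of all frame-generating
  join-specifications inside U_e. Passing from W to W^+ does not change the lattice of ideals,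
  so W^+ is again frame-generating; and since every closed set of Gamma_e is a W-ideal when
  W is contained in U_e, also W^+ is contained in U_e. Hence W = (U_e)^- absorbs W^+.\<close>

lemma is_join_unique: "is_join S x \<Longrightarrow> is_join S y \<Longrightarrow> x = (y::'a::order)"
  unfolding is_join_def by (meson order_antisym)

lemma is_join_join: "has_join S \<Longrightarrow> is_join S (join S)"
  unfolding has_join_def join_def by (metis is_join_unique theI)

lemma join_least: "has_join S \<Longrightarrow> (\<And>s. s \<in> S \<Longrightarrow> s \<le> x) \<Longrightarrow> join S \<le> x"
  using is_join_join unfolding is_join_def by blast

lemma has_join_singleton: "has_join {p::'a::order}"
  and join_singleton: "join {p::'a::order} = p"
proof -
  have "is_join {p} p" unfolding is_join_def by auto
  moreover from this show "has_join {p}"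
    unfolding has_join_def by blast
  ultimately show "join {p} = p"
    using is_join_unique is_join_join by blast
qed

lemma U_ideal_down_closed: "U_ideal U C \<Longrightarrow> y \<in> C \<Longrightarrow> x \<le> y \<Longrightarrow> x \<in> C"
  unfolding U_ideal_def by blast

lemma U_ideal_join: "U_ideal U C \<Longrightarrow> S \<in> U \<Longrightarrow> S \<subseteq> C \<Longrightarrow> join S \<in> C"
  unfolding U_ideal_def by blast

lemma U_ideal_Inter: "(\<And>C. C \<in> F \<Longrightarrow> U_ideal U C) \<Longrightarrow> U_ideal U (\<Inter>F)"
  unfolding U_ideal_def by blast

lemma U_ideal_Int: "U_ideal U C \<Longrightarrow> U_ideal U D \<Longrightarrow> U_ideal U (C \<inter> D)"
  using U_ideal_Inter[of "{C, D}"] by auto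

lemma U_ideal_antimono: "U \<subseteq> U' \<Longrightarrow> U_ideal U' C \<Longrightarrow> U_ideal U C"
  unfolding U_ideal_def by blast

lemma U_ideal_atMost: "join_spec U \<Longrightarrow> U_ideal U {..x}"
  unfolding U_ideal_def join_spec_def by (auto intro: join_least order_trans)

lemma U_ideal_Gamma_U: "U_ideal U (Gamma_U U S)"
  unfolding Gamma_U_def by (rule U_ideal_Inter) auto

lemma subset_Gamma_U: "S \<subseteq> Gamma_U U S"
  unfolding Gamma_U_def by auto

lemma Gamma_U_least: "U_ideal U C \<Longrightarrow> S \<subseteq> C \<Longrightarrow> Gamma_U U S \<subseteq> C"
  unfolding Gamma_U_def by auto

lemma join_in_Gamma_U: "S \<in> U \<Longrightarrow> join S \<in> Gamma_U U S"
  using U_ideal_join[OF U_ideal_Gamma_U _ subset_Gamma_U] .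

lemma Gamma_U_mono_spec: "U \<subseteq> U' \<Longrightarrow> Gamma_U U S \<subseteq> Gamma_U U' S"
  by (meson Gamma_U_least U_ideal_Gamma_U U_ideal_antimono subset_Gamma_U)

lemma lubX_eq: "lub_in X B a \<Longrightarrow> lubX X B = a"
  unfolding lubX_def lub_in_def by (rule the_equality) auto

lemma glbX_eq: "glb_in X B a \<Longrightarrow> glbX X B = a"
  unfolding glbX_def glb_in_def by (rule the_equality) auto

lemma lub_in_I_U: "lub_in (I_U U) B (Gamma_U U (\<Union>B))"
  unfolding lub_in_def I_U_def
proof (intro conjI ballI impI)
  show "Gamma_U U (\<Union>B) \<in> Collect (U_ideal U)"
    by (simp add: U_ideal_Gamma_U)
  show "b \<subseteq> Gamma_U U (\<Union>B)" if "b \<in> B" for b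
    using that subset_Gamma_U by blast
  show "Gamma_U U (\<Union>B) \<subseteq> c" if "c \<in> Collect (U_ideal U)" "\<forall>b\<in>B. b \<subseteq> c" for c
    using that by (simp add: Gamma_U_least Sup_least)
qed

lemma glb_in_I_U: "B \<subseteq> I_U U \<Longrightarrow> glb_in (I_U U) B (\<Inter>B)"
  unfolding glb_in_def I_U_def by (auto intro: U_ideal_Inter)

lemma is_frame_I_U_iff:
  "is_frame (I_U U) \<longleftrightarrow>
     (\<forall>a\<in>I_U U. \<forall>B\<subseteq>I_U U. a \<inter> Gamma_U U (\<Union>B) = Gamma_U U (\<Union>b\<in>B. a \<inter> b))"
    (is "_ \<longleftrightarrow> ?distributive")
proof -
  have glb2: "glbX (I_U U) {a, b} = a \<inter> b" if "a \<in> I_U U" "b \<in> I_U U" for a b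
    using glbX_eq[OF glb_in_I_U, of "{a, b}"] that by auto
  have lub: "lubX (I_U U) B = Gamma_U U (\<Union>B)" for B
    by (rule lubX_eq[OF lub_in_I_U])
  have law: "glbX (I_U U) {a, lubX (I_U U) B} = lubX (I_U U) ((\<lambda>b. glbX (I_U U) {a, b}) ` B)
      \<longleftrightarrow> a \<inter> Gamma_U U (\<Union>B) = Gamma_U U (\<Union>b\<in>B. a \<inter> b)"
    if a: "a \<in> I_U U" and B: "B \<subseteq> I_U U" for a B
  proof -
    have "Gamma_U U (\<Union>B) \<in> I_U U"
      using U_ideal_Gamma_U unfolding I_U_def by blast
    moreover have "(\<lambda>b. glbX (I_U U) {a, b}) ` B = (\<lambda>b. a \<inter> b) ` B"
      using glb2 a B by (intro image_cong) auto
    ultimately show ?thesis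
      using glb2[OF a] by (simp only: lub)
  qed
  have "\<exists>c. lub_in (I_U U) B c" "\<exists>c. glb_in (I_U U) B c" if "B \<subseteq> I_U U" for B
    using lub_in_I_U glb_in_I_U[OF that] by blast+
  then show ?thesis
    unfolding is_frame_def by (simp add: law)
qed

subsection \<open>Frame-generating join-specifications\<close>

definition distributive_spec :: "'a::order set set \<Rightarrow> bool" where
  "distributive_spec U \<longleftrightarrow>
     (\<forall>S\<in>U. \<forall>p. p \<le> join S \<longrightarrow> p \<in> Gamma_U U {q. q \<le> p \<and> (\<exists>s\<in>S. q \<le> s)})"

text \<open>The set below is the relative pseudocomplement a \<Rightarrow> C of down-sets; distributivity of U
  is exactly what makes it a U-ideal.\<close>
lemma U_ideal_relative_pseudocomplement:
  assumes "distributive_spec U" "U_ideal U a" "U_ideal U C"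
  shows "U_ideal U {x. \<forall>y\<le>x. y \<in> a \<longrightarrow> y \<in> C}" (is "U_ideal U ?K")
  unfolding U_ideal_def
proof (intro conjI allI impI ballI)
  fix x y assume "y \<in> ?K" "x \<le> y"
  then show "x \<in> ?K" using order_trans by blast
next
  fix S assume S: "S \<in> U" "S \<subseteq> ?K"
  show "join S \<in> ?K"
  proof (intro CollectI allI impI)
    fix q assume q: "q \<le> join S" "q \<in> a"
    have "{r. r \<le> q \<and> (\<exists>s\<in>S. r \<le> s)} \<subseteq> C"
      using S q U_ideal_down_closed[OF assms(2)] by blast
    moreover have "q \<in> Gamma_U U {r. r \<le> q \<and> (\<exists>s\<in>S. r \<le> s)}"
      using assms(1) S(1) q(1) unfolding distributive_spec_def by blast
    ultimately show "q \<in> C" using Gamma_U_least[OF assms(3)] by blast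
  qed
qed

lemma Int_Gamma_U_Union:
  assumes D: "distributive_spec U" and a: "U_ideal U a" and B: "\<And>b. b \<in> B \<Longrightarrow> U_ideal U b"
  shows "a \<inter> Gamma_U U (\<Union>B) = Gamma_U U (\<Union>b\<in>B. a \<inter> b)"
proof
  let ?C = "Gamma_U U (\<Union>b\<in>B. a \<inter> b)"
  let ?K = "{x. \<forall>y\<le>x. y \<in> a \<longrightarrow> y \<in> ?C}"
  have "\<Union>B \<subseteq> ?K"
    using B U_ideal_down_closed subset_Gamma_U[of "\<Union>b\<in>B. a \<inter> b" U] by blast
  then have "Gamma_U U (\<Union>B) \<subseteq> ?K"
    using Gamma_U_least U_ideal_relative_pseudocomplement[OF D a U_ideal_Gamma_U] by blast
  then show "a \<inter> Gamma_U U (\<Union>B) \<subseteq> ?C" by blast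
next
  have "(\<Union>b\<in>B. a \<inter> b) \<subseteq> a \<inter> Gamma_U U (\<Union>B)"
    using subset_Gamma_U[of "\<Union>B" U] by blast
  then show "Gamma_U U (\<Union>b\<in>B. a \<inter> b) \<subseteq> a \<inter> Gamma_U U (\<Union>B)"
    by (intro Gamma_U_least U_ideal_Int a U_ideal_Gamma_U)
qed

lemma distributive_spec_if_frame_generating:
  assumes js: "join_spec U" and fg: "frame_generating U"
  shows "distributive_spec U"
  unfolding distributive_spec_def
proof (intro ballI allI impI)
  fix S p assume S: "S \<in> U" and p: "p \<le> join S"
  let ?B = "(\<lambda>s. {..s}) ` S"
  have ideals: "{..p} \<in> I_U U" "?B \<subseteq> I_U U"
    using U_ideal_atMost[OF js] unfolding I_U_def by auto
  have "join S \<in> Gamma_U U (\<Union>?B)"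
    using U_ideal_join[OF U_ideal_Gamma_U S] subset_Gamma_U[of "\<Union>?B" U] by blast
  then have "p \<in> {..p} \<inter> Gamma_U U (\<Union>?B)"
    using U_ideal_down_closed[OF U_ideal_Gamma_U _ p] by blast
  also have "\<dots> = Gamma_U U (\<Union>b\<in>?B. {..p} \<inter> b)"
    using fg ideals unfolding frame_generating_def is_frame_I_U_iff by blast
  also have "(\<Union>b\<in>?B. {..p} \<inter> b) = {q. q \<le> p \<and> (\<exists>s\<in>S. q \<le> s)}"
    by auto
  finally show "p \<in> Gamma_U U {q. q \<le> p \<and> (\<exists>s\<in>S. q \<le> s)}" .
qed

lemma frame_generating_iff_distributive_spec:
  assumes "join_spec U"
  shows "frame_generating U \<longleftrightarrow> distributive_spec U"
proof
  assume "distributive_spec U"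
  then show "frame_generating U"
    unfolding frame_generating_def is_frame_I_U_iff
    using Int_Gamma_U_Union unfolding I_U_def by blast
qed (rule distributive_spec_if_frame_generating[OF assms])

lemma distributive_spec_Union:
  assumes "\<And>W. W \<in> F \<Longrightarrow> distributive_spec W"
  shows "distributive_spec (\<Union>F)"
  unfolding distributive_spec_def
proof (intro ballI allI impI)
  fix S p assume "S \<in> \<Union>F" "p \<le> join S"
  then obtain W where "W \<in> F" "S \<in> W" "p \<in> Gamma_U W {q. q \<le> p \<and> (\<exists>s\<in>S. q \<le> s)}"
    using assms unfolding distributive_spec_def by blast
  then show "p \<in> Gamma_U (\<Union>F) {q. q \<le> p \<and> (\<exists>s\<in>S. q \<le> s)}"
    using Gamma_U_mono_spec[of W "\<Union>F"] by blast
qed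

lemma distributive_spec_singletons: "distributive_spec {{p} | p::'a::order. True}"
  unfolding distributive_spec_def
proof (intro ballI allI impI)
  fix S and p :: 'a
  assume "S \<in> {{p} | p. True}" and p: "p \<le> join S"
  then obtain r where "S = {r}"
    by blast
  with p have "p \<in> {q. q \<le> p \<and> (\<exists>s\<in>S. q \<le> s)}"
    by (simp add: join_singleton)
  then show "p \<in> Gamma_U {{p} | p. True} {q. q \<le> p \<and> (\<exists>s\<in>S. q \<le> s)}"
    by (rule subsetD[OF subset_Gamma_U])
qed

lemma join_spec_singletons: "join_spec {{p} | p::'a::order. True}"
  unfolding join_spec_def using has_join_singleton by blast

subsection \<open>The largest frame-generating join-specification below V\<close>

lemma frame_generating_Union:
  fixes V :: "'a::order set set"
  defines "F \<equiv> {W. join_spec W \<and> frame_generating W \<and> W \<subseteq> V}"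
  assumes singletons: "\<forall>p. {p} \<in> V"
  shows "join_spec (\<Union>F)" "frame_generating (\<Union>F)"
proof -
  have "frame_generating {{p} | p::'a. True}"
    using frame_generating_iff_distributive_spec[OF join_spec_singletons]
      distributive_spec_singletons by blast
  moreover have "{{p} | p::'a. True} \<subseteq> V"
    using singletons by blast
  ultimately have "{{p} | p. True} \<in> F"
    unfolding F_def using join_spec_singletons by (intro CollectI conjI)
  then show js: "join_spec (\<Union>F)"
    unfolding join_spec_def
  proof (intro conjI ballI allI)
    show "has_join S" if "S \<in> \<Union>F" for S
      using that unfolding F_def join_spec_def by blast
  qed blast
  have "distributive_spec W" if "W \<in> F" for W
    using that frame_generating_iff_distributive_spec unfolding F_def by blast
  then show "frame_generating (\<Union>F)"
    by (simp add: frame_generating_iff_distributive_spec[OF js] distributive_spec_Union)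
qed

lemma minus_spec_eq_Union:
  fixes V :: "'a::order set set"
  assumes "\<forall>p. {p} \<in> V"
  shows "minus_spec V = \<Union>{W. join_spec W \<and> frame_generating W \<and> W \<subseteq> V}"
  unfolding minus_spec_def
proof (rule the_equality)
  let ?F = "{W. join_spec W \<and> frame_generating W \<and> W \<subseteq> V}"
  have "\<Union>?F \<subseteq> V"
    by blast
  with frame_generating_Union[OF assms] have Union_in: "\<Union>?F \<in> ?F"
    by (intro CollectI conjI)
  have upper: "\<forall>W'. join_spec W' \<and> frame_generating W' \<and> W' \<subseteq> V \<longrightarrow> W' \<subseteq> \<Union>?F"
    by (intro allI impI Union_upper CollectI)
  from Union_in upper
  show "join_spec (\<Union>?F) \<and> frame_generating (\<Union>?F) \<and> \<Union>?F \<subseteq> V \<and>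
      (\<forall>W'. join_spec W' \<and> frame_generating W' \<and> W' \<subseteq> V \<longrightarrow> W' \<subseteq> \<Union>?F)"
    by (intro conjI) (simp_all only: mem_Collect_eq)
  fix W
  assume W: "join_spec W \<and> frame_generating W \<and> W \<subseteq> V \<and>
      (\<forall>W'. join_spec W' \<and> frame_generating W' \<and> W' \<subseteq> V \<longrightarrow> W' \<subseteq> W)"
  show "W = \<Union>?F"
  proof (rule subset_antisym)
    show "W \<subseteq> \<Union>?F"
      using upper W by blast
    show "\<Union>?F \<subseteq> W"
      using W Union_in by blast
  qed
qed

subsection \<open>The saturation W^+\<close>

lemma subset_U_plus: "join_spec W \<Longrightarrow> W \<subseteq> U_plus W"
  unfolding U_plus_def join_spec_def using join_in_Gamma_U by blast

lemma singleton_in_U_plus: "{p} \<in> U_plus W"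
proof -
  have "p \<in> Gamma_U W {p}"
    by (rule subsetD[OF subset_Gamma_U]) simp
  then show ?thesis
    unfolding U_plus_def by (simp add: has_join_singleton join_singleton)
qed

lemma join_spec_U_plus: "join_spec (U_plus W)"
  unfolding join_spec_def
proof (intro conjI ballI allI singleton_in_U_plus)
  show "has_join S" if "S \<in> U_plus W" for S
    using that unfolding U_plus_def by simp
qed

lemma U_ideal_U_plus_iff:
  assumes "join_spec W"
  shows "U_ideal (U_plus W) C \<longleftrightarrow> U_ideal W C"
proof
  assume "U_ideal (U_plus W) C"
  then show "U_ideal W C"
    using U_ideal_antimono[OF subset_U_plus[OF assms]] by blast
next
  assume C: "U_ideal W C"
  show "U_ideal (U_plus W) C"
    unfolding U_ideal_def
  proof (intro conjI allI impI ballI)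
    show "x \<in> C" if "y \<in> C" "x \<le> y" for x y
      using U_ideal_down_closed[OF C that] .
    show "join S \<in> C" if "S \<in> U_plus W" "S \<subseteq> C" for S
      using that Gamma_U_least[OF C] unfolding U_plus_def by blast
  qed
qed

lemma I_U_U_plus: "join_spec W \<Longrightarrow> I_U (U_plus W) = I_U W"
  unfolding I_U_def by (intro Collect_cong U_ideal_U_plus_iff)

lemma frame_generating_U_plus:
  "join_spec W \<Longrightarrow> frame_generating W \<Longrightarrow> frame_generating (U_plus W)"
  unfolding frame_generating_def by (simp add: I_U_U_plus)

lemma U_ideal_vimage_atMost:
  assumes "mono e" "W \<subseteq> U_e e"
  shows "U_ideal W (e -` {..x})"
  unfolding U_ideal_def
proof (intro conjI allI impI ballI)
  fix a b assume "b \<in> e -` {..x}" "a \<le> b"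
  then show "a \<in> e -` {..x}" using monoD[OF assms(1)] order_trans by fastforce
next
  fix T assume "T \<in> W" "T \<subseteq> e -` {..x}"
  then show "join T \<in> e -` {..x}"
    using assms(2) unfolding U_e_def Gamma_e_def by blast
qed

lemma Gamma_U_subset_Gamma_e:
  assumes "mono e" "W \<subseteq> U_e e"
  shows "Gamma_U W S \<subseteq> Gamma_e e S"
  unfolding Gamma_e_def
proof (rule Inter_greatest)
  fix C assume "C \<in> {C. (\<exists>x. C = e -` {..x}) \<and> S \<subseteq> C}"
  then obtain x where "C = e -` {..x}" "S \<subseteq> C"
    by blast
  then show "Gamma_U W S \<subseteq> C"
    using Gamma_U_least[OF U_ideal_vimage_atMost[OF assms]] by simp
qed

lemma U_plus_subset_U_e:
  assumes "mono e" "W \<subseteq> U_e e"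
  shows "U_plus W \<subseteq> U_e e"
proof
  fix S assume "S \<in> U_plus W"
  then show "S \<in> U_e e"
    using Gamma_U_subset_Gamma_e[OF assms, of S] unfolding U_plus_def U_e_def by blast
qed

lemma singleton_in_U_e: "{p} \<in> U_e e"
proof -
  have "p \<in> Gamma_e e {p}"
    unfolding Gamma_e_def by blast
  then show ?thesis
    unfolding U_e_def by (simp add: has_join_singleton join_singleton)
qed

theorem lemma5p4:
  fixes e :: "'a::order \<Rightarrow> 'b::complete_lattice"
  assumes "join_completion e"
  shows "maximal_spec (minus_spec (U_e e))"
proof -
  let ?F = "{W. join_spec W \<and> frame_generating W \<and> W \<subseteq> U_e e}"
  have singletons: "\<forall>p. {p} \<in> U_e e"
    using singleton_in_U_e by blast
  have "mono e"
    using assms unfolding join_completion_def order_embedding_def by (auto intro: monoI)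
  moreover have "\<Union>?F \<subseteq> U_e e"
    by (rule Union_least) simp
  ultimately have "U_plus (\<Union>?F) \<in> ?F"
    using frame_generating_Union[OF singletons]
    by (intro CollectI conjI join_spec_U_plus frame_generating_U_plus U_plus_subset_U_e)
  then have "U_plus (\<Union>?F) \<subseteq> \<Union>?F"
    by (rule Union_upper)
  moreover have "\<Union>?F \<subseteq> U_plus (\<Union>?F)"
    using frame_generating_Union(1)[OF singletons] by (rule subset_U_plus)
  ultimately show ?thesis
    unfolding maximal_spec_def minus_spec_eq_Union[OF singletons] by (rule subset_antisym[rotated])
qed

end
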